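(* Let $\Pi$ be a finite simply laced diagram with labelling $\sigma:I\to V$ and let $\widetilde{\mathcal A}$ be a continuous $\mathrm{Spin}(2)$-amalgam with respect to $\Pi$ and $\sigma$. Then $\widetilde{\mathcal A}$ is isomorphic to the standard $\mathrm{Spin}(2)$-amalgam $\mathcal A(\Pi,\sigma,\mathrm{Spin}(2))$.
   Context: $\mathrm{Spin}(m)$ lives in the real Clifford algebra with $e_k^2=-1$, $e_ke_l=-e_le_k$; $\mathrm{Spin}(2)=\{\cos\alpha+\sin\alpha\,e_1e_2\}$; $\widetilde\varepsilon_{12},\widetilde\varepsilon_{23}:\mathrm{Spin}(2)\to\mathrm{Spin}(3)$ are $a+be_1e_2\mapsto a+be_1e_2$ and $a+be_1e_2\mapsto a+be_2e_3$; $\widetilde\iota_1(x)=(x,1)$, $\widetilde\iota_2(x)=(1,x)$ into $\mathrm{Spin}(2)\times\mathrm{Spin}(2)$. A $\mathrm{Spin}(2)$-amalgam with respect to $\Pi$ and $\sigma$ is a family of groups $G_{ij}$ ($i\ne j\in I$) with monomorphisms $\phi^i_{ij}:\mathrm{Spin}(2)\to G_{ij}$, where $G_{ij}=\mathrm{Spin}(3)$ if $\{i^\sigma,j^\sigma\}$ is an edge of $\Pi$ and $G_{ij}=\mathrm{Spin}(2)\times\mathrm{Spin}(2)$ otherwise, and for $i<j$ the images satisfy $\phi^i_{ij}(\mathrm{Spin}(2))=\widetilde\varepsilon_{12}(\mathrm{Spin}(2))$, $\phi^j_{ij}(\mathrm{Spin}(2))=\widetilde\varepsilon_{23}(\mathrm{Spin}(2))$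 (edge) resp. $=\widetilde\iota_1(\mathrm{Spin}(2)),\widetilde\iota_2(\mathrm{Spin}(2))$ (non-edge). It is continuous if all $\phi^i_{ij}$ are continuous. The standard one has $\phi^i_{ij}=\widetilde\varepsilon_{12},\phi^j_{ij}=\widetilde\varepsilon_{23}$ resp. $\widetilde\iota_1,\widetilde\iota_2$ for $i<j$. An isomorphism of amalgams is a permutation $\pi$ of $I$ with group isomorphisms $\alpha_{ij}:G_{ij}\to H_{\pi(i)\pi(j)}$ satisfying $\alpha_{ij}\circ\phi^i_{ij}=\psi^{\pi(i)}_{\pi(i)\pi(j)}$. *)

theory Defs
  imports Complex_Main "HOL-Algebra.Group"
begin

text \<open>Model of the relevant part of the real Clifford algebra (e_k^2 = -1).
  Spin(2) = {a + b e1e2 : a^2+b^2 = 1}; we encode a + b e1e2 as the complex number a + b i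
  (since (e1e2)^2 = -1, this is an isomorphism of topological groups onto the unit circle).
  Spin(3) lies in the even subalgebra with basis 1, e1e2, e2e3, e3e1, which satisfies the
  quaternion relations with i = e1e2, j = e2e3, k = e3e1 (ij = k, jk = i, ki = j).
  We encode a + b e1e2 + c e2e3 + d e3e1 as the pair (a + b i, c + d i) of complex numbers
  (Cayley-Dickson: q = z + w j), and Spin(3) is the unit sphere of this even part.\<close>

definition Spin2 :: "complex monoid" where
  "Spin2 = \<lparr>carrier = {z. cmod z = 1}, mult = (*), one = 1\<rparr>"

definition qmult :: "complex \<times> complex \<Rightarrow> complex \<times> complex \<Rightarrow> complex \<times> complex" where
  "qmult p q = (fst p * fst q - snd p * cnj (snd q), fst p * snd q + snd p * cnj (fst q))"

definition Spin3 :: "(complex \<times> complex) monoid" where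
  "Spin3 = \<lparr>carrier = {p. (cmod (fst p))^2 + (cmod (snd p))^2 = 1}, mult = qmult, one = (1, 0)\<rparr>"

definition Torus :: "(complex \<times> complex) monoid" where
  "Torus = Spin2 \<times>\<times> Spin2"

text \<open>a + b e1e2 \<mapsto> a + b e1e2 and a + b e1e2 \<mapsto> a + b e2e3.\<close>
definition eps12 :: "complex \<Rightarrow> complex \<times> complex" where
  "eps12 x = (x, 0)"

definition eps23 :: "complex \<Rightarrow> complex \<times> complex" where
  "eps23 x = (complex_of_real (Re x), complex_of_real (Im x))"

definition iota1 :: "complex \<Rightarrow> complex \<times> complex" where
  "iota1 x = (x, 1)"

definition iota2 :: "complex \<Rightarrow> complex \<times> complex" where
  "iota2 x = (1, x)"

definition simply_laced_diagram :: "'v set \<Rightarrow> ('v \<Rightarrow> 'v \<Rightarrow> bool) \<Rightarrow> bool" where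
  "simply_laced_diagram V E \<longleftrightarrow> finite V \<and> (\<forall>x y. E x y \<longrightarrow> x \<in> V \<and> y \<in> V)
     \<and> (\<forall>x y. E x y \<longrightarrow> E y x) \<and> (\<forall>x. \<not> E x x)"

definition labelling :: "'i set \<Rightarrow> 'v set \<Rightarrow> ('i \<Rightarrow> 'v) \<Rightarrow> bool" where
  "labelling I V \<sigma> \<longleftrightarrow> bij_betw \<sigma> I V"

definition Gdiag :: "('v \<Rightarrow> 'v \<Rightarrow> bool) \<Rightarrow> ('i \<Rightarrow> 'v) \<Rightarrow> 'i \<Rightarrow> 'i \<Rightarrow> (complex \<times> complex) monoid" where
  "Gdiag E \<sigma> i j = (if E (\<sigma> i) (\<sigma> j) then Spin3 else Torus)"

text \<open>An amalgam is given by phi i j = phi^i_{ij} : Spin(2) -> G_{ij} for i \<noteq> j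
  (the group G_{ij} = G_{ji} being indexed by the unordered pair).\<close>
definition spin2_amalgam ::
  "'i::linorder set \<Rightarrow> ('v \<Rightarrow> 'v \<Rightarrow> bool) \<Rightarrow> ('i \<Rightarrow> 'v) \<Rightarrow> ('i \<Rightarrow> 'i \<Rightarrow> complex \<Rightarrow> complex \<times> complex) \<Rightarrow> bool" where
  "spin2_amalgam I E \<sigma> \<phi> \<longleftrightarrow>
     (\<forall>i\<in>I. \<forall>j\<in>I. i \<noteq> j \<longrightarrow>
        \<phi> i j \<in> hom Spin2 (Gdiag E \<sigma> i j) \<and> inj_on (\<phi> i j) (carrier Spin2)) \<and>
     (\<forall>i\<in>I. \<forall>j\<in>I. i < j \<longrightarrow>
        (if E (\<sigma> i) (\<sigma> j)
         then \<phi> i j ` carrier Spin2 = eps12 ` carrier Spin2 \<and> \<phi> j i ` carrier Spin2 = eps23 ` carrier Spin2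
         else \<phi> i j ` carrier Spin2 = iota1 ` carrier Spin2 \<and> \<phi> j i ` carrier Spin2 = iota2 ` carrier Spin2))"

definition continuous_amalgam :: "'i set \<Rightarrow> ('i \<Rightarrow> 'i \<Rightarrow> complex \<Rightarrow> complex \<times> complex) \<Rightarrow> bool" where
  "continuous_amalgam I \<phi> \<longleftrightarrow> (\<forall>i\<in>I. \<forall>j\<in>I. i \<noteq> j \<longrightarrow> continuous_on (carrier Spin2) (\<phi> i j))"

definition standard_amalgam ::
  "('v \<Rightarrow> 'v \<Rightarrow> bool) \<Rightarrow> ('i::linorder \<Rightarrow> 'v) \<Rightarrow> 'i \<Rightarrow> 'i \<Rightarrow> complex \<Rightarrow> complex \<times> complex" where
  "standard_amalgam E \<sigma> i j =
     (if i < j then (if E (\<sigma> i) (\<sigma> j) then eps12 else iota1)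
      else (if E (\<sigma> i) (\<sigma> j) then eps23 else iota2))"

definition amalgam_iso ::
  "'i set \<Rightarrow> ('v \<Rightarrow> 'v \<Rightarrow> bool) \<Rightarrow> ('i \<Rightarrow> 'v) \<Rightarrow> ('i \<Rightarrow> 'i \<Rightarrow> complex \<Rightarrow> complex \<times> complex)
     \<Rightarrow> ('i \<Rightarrow> 'i \<Rightarrow> complex \<Rightarrow> complex \<times> complex) \<Rightarrow> bool" where
  "amalgam_iso I E \<sigma> \<phi> \<psi> \<longleftrightarrow>
     (\<exists>\<pi> \<alpha>. bij_betw \<pi> I I \<and>
        (\<forall>i\<in>I. \<forall>j\<in>I. i \<noteq> j \<longrightarrow>
           \<alpha> i j = \<alpha> j i \<and>
           \<alpha> i j \<in> iso (Gdiag E \<sigma> i j) (Gdiag E \<sigma> (\<pi> i) (\<pi> j)) \<and>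
           (\<forall>x\<in>carrier Spin2. \<alpha> i j (\<phi> i j x) = \<psi> (\<pi> i) (\<pi> j) x)))"

end

theory Submission
  imports Defs "HOL-Analysis.Analysis" "HOL-Library.Real_Mod"
begin

text \<open>A continuous injective endomorphism of the circle group is the identity or complex
  conjugation: lifting it through \<open>exp\<close> turns it into a continuous additive map on \<open>\<real>\<close>,
  i.e. \<open>z \<mapsto> z\<^sup>n\<close>, and injectivity forces \<open>n = \<plusminus>1\<close>. Since each structure map of the amalgam
  has the same image as the corresponding standard embedding, it is that embedding, possibly
  precomposed with conjugation. For every pair \<open>i < j\<close> the two conjugation flags are undone
  independently by an automorphism of \<open>G\<^sub>i\<^sub>j\<close>: an inner automorphism of \<open>Spin(3)\<close> inverting one
  of the two standard circles and fixing the other, or conjugation of one factor of the torus.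
  These automorphisms, over the identity permutation of \<open>I\<close>, form the isomorphism.\<close>

lemma continuous_additive_periodic_eq_0:
  fixes m :: "real \<Rightarrow> 'a::real_normed_vector"
  assumes add: "\<And>s t. m (s + t) = m s + m t" and cont: "continuous_on UNIV m"
    and "p > 0" and per: "m p = 0"
  shows "m t = 0"
proof -
  have m_nat: "m (of_nat n * x) = of_nat n *\<^sub>R m x" for n x
    by (induction n) (use add[of 0 0] in \<open>auto simp: distrib_right add scaleR_add_left\<close>)
  have m_neg: "m (- x) = - m x" for x
    using add[of x "- x"] add[of 0 0] by (simp add: eq_neg_iff_add_eq_0 add.commute)
  have m_int: "m (of_int j * x) = of_int j *\<^sub>R m x" for j x
    by (cases j rule: int_cases2) (simp_all add: m_nat m_neg)
  have "compact (m ` {0..p})"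
    by (rule compact_continuous_image) (auto intro: continuous_on_subset[OF cont])
  then obtain B where B: "\<And>x. x \<in> {0..p} \<Longrightarrow> norm (m x) \<le> B"
    by (meson compact_imp_bounded bounded_iff imageI)
  have bounded: "norm (m x) \<le> B" for x
  proof -
    define j where "j = \<lfloor>x / p\<rfloor>"
    have "of_int j \<le> x / p" "x / p < of_int j + 1"
      unfolding j_def by linarith+
    then have "x - of_int j * p \<in> {0..p}"
      using \<open>p > 0\<close> by (auto simp: field_simps)
    moreover have "m x = m (x - of_int j * p)"
      using add[of "x - of_int j * p" "of_int j * p"] by (simp add: m_int per)
    ultimately show ?thesis using B by simp
  qed
  show ?thesis
  proof (rule ccontr)
    assume "m t \<noteq> 0"
    then obtain n :: nat where "B / norm (m t) < of_nat n"
      using reals_Archimedean2 by blast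
    then have "B < of_nat n * norm (m t)"
      using \<open>m t \<noteq> 0\<close> by (simp add: field_simps)
    also have "\<dots> = norm (m (of_nat n * t))"
      by (simp add: m_nat)
    finally show False
      using bounded[of "of_nat n * t"] by simp
  qed
qed

lemma continuous_exp_eq_1_constant:
  fixes f :: "'a::topological_space \<Rightarrow> complex"
  assumes "connected S" and "continuous_on S f" and exp1: "\<And>x. x \<in> S \<Longrightarrow> exp (f x) = 1"
  shows "f constant_on S"
proof (rule continuous_discrete_range_constant[OF assms(1,2)])
  fix x assume "x \<in> S"
  have "2 * pi \<le> norm (f y - f x)" if "y \<in> S" "f y \<noteq> f x" for y
  proof -
    have "exp (f y) = exp (f x)" using exp1 that(1) \<open>x \<in> S\<close> by simp
    then have "2 * pi \<le> \<bar>Im (f y) - Im (f x)\<bar>"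
      using exp_complex_eqI that(2) by force
    also have "\<dots> \<le> norm (f y - f x)"
      using abs_Im_le_cmod[of "f y - f x"] by simp
    finally show ?thesis .
  qed
  then show "\<exists>e>0. \<forall>y. y \<in> S \<and> f y \<noteq> f x \<longrightarrow> e \<le> norm (f y - f x)"
    by (intro exI[of _ "2 * pi"]) auto
qed

abbreviation circle :: "complex set" where
  "circle \<equiv> {z. cmod z = 1}"

lemma cis_Arg_circle:
  assumes "z \<in> circle"
  shows "cis (Arg z) = z"
proof -
  have "z \<noteq> 0"
    using assms by auto
  then show ?thesis
    using assms by (simp add: cis_Arg sgn_div_norm)
qed

text \<open>The lift \<open>h\<close> of \<open>g\<close> through \<open>exp\<close> is additive up to an error in \<open>2\<pi>\<i>\<int>\<close>;
  this error is continuous, hence constant, and normalising \<open>h\<close> at \<open>0\<close> removes it.\<close>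
lemma continuous_hom_additive_logarithm:
  fixes g :: "real \<Rightarrow> complex"
  assumes g_cont: "continuous_on UNIV g" and g_nz: "\<And>t. g t \<noteq> 0"
    and g_add: "\<And>s t. g (s + t) = g s * g t"
  obtains k where "continuous_on UNIV k" and "\<And>s t. k (s + t) = k s + k t"
    and "\<And>t. g t = exp (k t)"
proof -
  obtain h where h_cont: "continuous_on UNIV h" and g_exp: "\<And>t. g t = exp (h t)"
    using continuous_logarithm_on_contractible[OF g_cont convex_imp_contractible[OF convex_UNIV]] g_nz
    by (metis UNIV_I)
  define D where "D p = h (fst p + snd p) - h (fst p) - h (snd p)" for p :: "real \<times> real"
  have D_exp: "exp (D p) = 1" for p
    using g_add[of "fst p" "snd p"] g_nz by (simp add: D_def exp_diff flip: g_exp)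
  have "D constant_on UNIV"
    by (rule continuous_exp_eq_1_constant[OF connected_UNIV _ D_exp])
       (auto simp: D_def intro!: continuous_intros continuous_on_compose2[OF h_cont])
  then have "D p = D (0, 0)" for p
    unfolding constant_on_def by (metis UNIV_I)
  then have D_eq: "D p = - h 0" for p
    by (simp add: D_def)
  have "exp (h 0) = 1"
    using D_exp[of "(0, 0)"] D_eq[of "(0, 0)"] by (simp add: exp_minus)
  show ?thesis
  proof (rule that[of "\<lambda>t. h t - h 0"])
    show "continuous_on UNIV (\<lambda>t. h t - h 0)"
      by (intro continuous_intros h_cont)
    show "h (s + t) - h 0 = (h s - h 0) + (h t - h 0)" for s t
      using D_eq[of "(s, t)"] by (simp add: D_def algebra_simps)
    show "g t = exp (h t - h 0)" for t
      using \<open>exp (h 0) = 1\<close> by (simp add: exp_diff g_exp)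
  qed
qed

lemma continuous_circle_hom_eq_cis_int_mult:
  fixes f :: "complex \<Rightarrow> complex"
  assumes cont: "continuous_on circle f" and maps: "\<And>z. z \<in> circle \<Longrightarrow> f z \<in> circle"
    and mult: "\<And>x y. x \<in> circle \<Longrightarrow> y \<in> circle \<Longrightarrow> f (x * y) = f x * f y"
  obtains n :: int where "\<And>t. f (cis t) = cis (of_int n * t)"
proof -
  define g where "g t = f (cis t)" for t
  have g_cont: "continuous_on UNIV g"
    unfolding g_def by (rule continuous_on_compose2[OF cont]) (auto intro!: continuous_intros)
  have g_nz: "g t \<noteq> 0" for t
    using maps[of "cis t"] by (auto simp: g_def)
  have g_add: "g (s + t) = g s * g t" for s t
    by (simp add: g_def mult flip: cis_mult)
  obtain k :: "real \<Rightarrow> complex" where k_cont: "continuous_on UNIV k"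
    and k_add: "\<And>s t. k (s + t) = k s + k t" and g_exp: "\<And>t. g t = exp (k t)"
    using continuous_hom_additive_logarithm[OF g_cont g_nz g_add] by blast
  have "k 0 = 0"
    using k_add[of 0 0] by simp
  then have "exp (k (2 * pi)) = 1"
    using g_exp[of "2 * pi"] g_exp[of 0] by (simp add: g_def)
  then obtain n :: int where "Re (k (2 * pi)) = 0" "Im (k (2 * pi)) = of_int (2 * n) * pi"
    unfolding exp_eq_1 by blast
  then have k_2pi: "k (2 * pi) = \<i> * of_real (of_int n * (2 * pi))"
    by (simp add: complex_eq_iff)
  define m where "m t = k t - \<i> * of_real (of_int n * t)" for t
  have "m t = 0" for t
  proof (rule continuous_additive_periodic_eq_0[of m "2 * pi"])
    show "m (s + t) = m s + m t" for s t
      by (simp add: m_def k_add algebra_simps)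
    show "continuous_on UNIV m"
      unfolding m_def by (intro continuous_intros k_cont)
    show "m (2 * pi) = 0"
      by (simp add: m_def k_2pi)
  qed simp
  then have "f (cis t) = cis (of_int n * t)" for t
    using g_exp[of t] by (simp add: g_def m_def cis_conv_exp)
  then show ?thesis
    by (rule that)
qed

lemma cis_int_mult_inj_imp_unit:
  fixes n :: int
  assumes inj: "\<And>s t. cis (of_int n * s) = cis (of_int n * t) \<Longrightarrow> cis s = cis t"
  shows "n = 1 \<or> n = -1"
proof (cases "n = 0")
  case True
  then show ?thesis using inj[of pi 0] by simp
next
  case False
  have "cis (of_int n * (2 * pi / of_int n)) = cis (of_int n * 0)"
    using False by simp
  then have "cis (2 * pi / of_int n) = cis 0"
    by (rule inj)
  then obtain j :: int where "2 * pi / of_int n = of_int j * (2 * pi)"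
    unfolding cis_zero cis_eq_1_iff by blast
  then have "n * j = 1"
    using False by (simp add: field_simps flip: of_int_mult)
  then show ?thesis
    by (auto simp: zmult_eq_1_iff)
qed

lemma continuous_circle_embedding_eq_id_or_cnj:
  fixes f :: "complex \<Rightarrow> complex"
  assumes cont: "continuous_on circle f" and maps: "\<And>z. z \<in> circle \<Longrightarrow> f z \<in> circle"
    and mult: "\<And>x y. x \<in> circle \<Longrightarrow> y \<in> circle \<Longrightarrow> f (x * y) = f x * f y"
    and inj: "inj_on f circle"
  shows "(\<forall>z\<in>circle. f z = z) \<or> (\<forall>z\<in>circle. f z = cnj z)"
proof -
  obtain n :: int where f_cis: "\<And>t. f (cis t) = cis (of_int n * t)"
    using continuous_circle_hom_eq_cis_int_mult[OF cont maps mult] by blast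
  have "cis (of_int n * s) = cis (of_int n * t) \<Longrightarrow> cis s = cis t" for s t
    using inj by (simp add: inj_on_def flip: f_cis)
  then have "n = 1 \<or> n = -1"
    by (rule cis_int_mult_inj_imp_unit)
  moreover have "f z = cis (of_int n * Arg z)" and "z = cis (Arg z)" if "z \<in> circle" for z
    using f_cis[of "Arg z"] cis_Arg_circle[OF that] by simp_all
  ultimately show ?thesis
    by (metis cis_cnj mult_1 mult_minus1 of_int_1 of_int_minus)
qed

lemma carrier_Spin2: "carrier Spin2 = circle"
  by (simp add: Spin2_def)

lemma mult_Spin2: "x \<otimes>\<^bsub>Spin2\<^esub> y = x * y"
  by (simp add: Spin2_def)

lemma carrier_Spin3: "carrier Spin3 = {p. (cmod (fst p))\<^sup>2 + (cmod (snd p))\<^sup>2 = 1}"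
  by (simp add: Spin3_def)

lemma mult_Spin3: "p \<otimes>\<^bsub>Spin3\<^esub> q = qmult p q"
  by (simp add: Spin3_def)

lemma carrier_Torus: "carrier Torus = circle \<times> circle"
  by (simp add: Torus_def DirProd_def Spin2_def)

lemma mult_Torus: "p \<otimes>\<^bsub>Torus\<^esub> q = (fst p * fst q, snd p * snd q)"
  by (simp add: Torus_def DirProd_def Spin2_def case_prod_beta)

lemma Gdiag_commute:
  assumes "symp E"
  shows "Gdiag E \<sigma> j i = Gdiag E \<sigma> i j"
proof -
  have "E (\<sigma> j) (\<sigma> i) \<longleftrightarrow> E (\<sigma> i) (\<sigma> j)"
    using assms by (blast dest: sympD)
  then show ?thesis
    by (simp add: Gdiag_def)
qed

text \<open>The circle automorphism relating \<open>ph\<close> to \<open>e\<close> is read off through the continuous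
  left inverse \<open>r\<close> of \<open>e\<close>.\<close>
lemma continuous_embedding_same_image_eq_or_cnj:
  fixes ph e :: "complex \<Rightarrow> 'b::topological_space" and r :: "'b \<Rightarrow> complex"
  assumes cont: "continuous_on circle ph" and inj: "inj_on ph circle"
    and image: "ph ` circle = e ` circle"
    and ph_mult: "\<And>x y. x \<in> circle \<Longrightarrow> y \<in> circle \<Longrightarrow> ph (x * y) = M (ph x) (ph y)"
    and e_mult: "\<And>u v. u \<in> circle \<Longrightarrow> v \<in> circle \<Longrightarrow> M (e u) (e v) = e (u * v)"
    and r_e: "\<And>w. w \<in> circle \<Longrightarrow> r (e w) = w" and r_cont: "continuous_on UNIV r"
  shows "(\<forall>x\<in>circle. ph x = e x) \<or> (\<forall>x\<in>circle. ph x = e (cnj x))"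
proof -
  define f where "f x = r (ph x)" for x
  have ph_eq: "ph x = e (f x)" and f_circle: "f x \<in> circle" if "x \<in> circle" for x
  proof -
    have "ph x \<in> e ` circle"
      unfolding image[symmetric] using that by (rule imageI)
    then obtain w where "ph x = e w" "w \<in> circle"
      by (rule imageE)
    then show "ph x = e (f x)" "f x \<in> circle"
      by (simp_all add: f_def r_e)
  qed
  have "(\<forall>z\<in>circle. f z = z) \<or> (\<forall>z\<in>circle. f z = cnj z)"
  proof (rule continuous_circle_embedding_eq_id_or_cnj)
    show "continuous_on circle f"
      unfolding f_def by (rule continuous_on_compose2[OF r_cont cont]) auto
    show "f (x * y) = f x * f y" if "x \<in> circle" "y \<in> circle" for x y
    proof -
      have "f (x * y) = r (M (e (f x)) (e (f y)))"
        using ph_mult[OF that] ph_eq[OF that(1)] ph_eq[OF that(2)] by (simp add: f_def[of "x * y"])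
      also have "\<dots> = f x * f y"
        using that f_circle by (simp add: e_mult r_e norm_mult)
      finally show ?thesis .
    qed
    show "inj_on f circle"
      using inj by (auto simp: inj_on_def ph_eq)
  qed (use f_circle in blast)
  then show ?thesis
    using ph_eq by auto
qed

lemma spin2_embedding_eq_standard_or_cnj:
  assumes hom: "ph \<in> hom Spin2 (Gdiag E \<sigma> i j)" and inj: "inj_on ph circle"
    and cont: "continuous_on circle ph"
    and image: "ph ` circle = standard_amalgam E \<sigma> i j ` circle"
  shows "(\<forall>x\<in>circle. ph x = standard_amalgam E \<sigma> i j x)
    \<or> (\<forall>x\<in>circle. ph x = standard_amalgam E \<sigma> i j (cnj x))"
proof -
  have ph_mult: "ph (x * y) = ph x \<otimes>\<^bsub>Gdiag E \<sigma> i j\<^esub> ph y" if "x \<in> circle" "y \<in> circle" for x y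
    using hom that by (simp add: hom_def carrier_Spin2 mult_Spin2)
  note embedding = continuous_embedding_same_image_eq_or_cnj[OF cont inj image]
  consider (edge_lower) "E (\<sigma> i) (\<sigma> j)" "i < j" | (edge_upper) "E (\<sigma> i) (\<sigma> j)" "\<not> i < j"
    | (torus_lower) "\<not> E (\<sigma> i) (\<sigma> j)" "i < j" | (torus_upper) "\<not> E (\<sigma> i) (\<sigma> j)" "\<not> i < j"
    by blast
  then show ?thesis
  proof cases
    case edge_lower
    then show ?thesis
      using ph_mult by (intro embedding[where M = qmult and r = fst])
        (auto simp: standard_amalgam_def Gdiag_def mult_Spin3 eps12_def qmult_def intro!: continuous_intros)
  next
    case edge_upper
    then show ?thesis
      using ph_mult by (intro embedding[where M = qmult and r = "\<lambda>p. fst p + \<i> * snd p"])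
        (auto simp: standard_amalgam_def Gdiag_def mult_Spin3 eps23_def qmult_def complex_eq_iff
          intro!: continuous_intros)
  next
    case torus_lower
    then show ?thesis
      using ph_mult by (intro embedding[where M = "\<lambda>p q. (fst p * fst q, snd p * snd q)" and r = fst])
        (auto simp: standard_amalgam_def Gdiag_def mult_Torus iota1_def intro!: continuous_intros)
  next
    case torus_upper
    then show ?thesis
      using ph_mult by (intro embedding[where M = "\<lambda>p q. (fst p * fst q, snd p * snd q)" and r = snd])
        (auto simp: standard_amalgam_def Gdiag_def mult_Torus iota2_def intro!: continuous_intros)
  qed
qed

lemma spin2_amalgam_image_eq_standard:
  assumes amalgam: "spin2_amalgam I E \<sigma> \<phi>" and "symp E"
    and "i \<in> I" "j \<in> I" "i \<noteq> j"
  shows "\<phi> i j ` circle = standard_amalgam E \<sigma> i j ` circle"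
proof -
  have images: "if E (\<sigma> a) (\<sigma> b)
      then \<phi> a b ` circle = eps12 ` circle \<and> \<phi> b a ` circle = eps23 ` circle
      else \<phi> a b ` circle = iota1 ` circle \<and> \<phi> b a ` circle = iota2 ` circle"
    if "a \<in> I" "b \<in> I" "a < b" for a b
    using amalgam that unfolding spin2_amalgam_def carrier_Spin2 by blast
  show ?thesis
  proof (cases "i < j")
    case True
    then show ?thesis
      using images[OF assms(3,4) True] by (simp add: standard_amalgam_def split: if_splits)
  next
    case False
    then have "j < i" and "E (\<sigma> j) (\<sigma> i) = E (\<sigma> i) (\<sigma> j)"
      using \<open>i \<noteq> j\<close> \<open>symp E\<close> by (auto dest: sympD)
    then show ?thesis
      using images[OF assms(4,3)] False by (simp add: standard_amalgam_def split: if_splits)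
  qed
qed

definition cnj_if :: "bool \<Rightarrow> complex \<Rightarrow> complex" where
  "cnj_if b z = (if b then cnj z else z)"

lemma spin2_amalgam_ex_cnj_if_standard:
  assumes "spin2_amalgam I E \<sigma> \<phi>" and "continuous_amalgam I \<phi>"
    and "symp E" and "i \<in> I" "j \<in> I" "i \<noteq> j"
  shows "\<exists>b. \<forall>x\<in>circle. \<phi> i j x = standard_amalgam E \<sigma> i j (cnj_if b x)"
proof -
  have "\<phi> i j \<in> hom Spin2 (Gdiag E \<sigma> i j)" "inj_on (\<phi> i j) circle"
    using assms(1,4-6) unfolding spin2_amalgam_def by (simp_all add: carrier_Spin2)
  moreover have "continuous_on circle (\<phi> i j)"
    using assms(2,4-6) unfolding continuous_amalgam_def by (simp add: carrier_Spin2)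
  ultimately have "(\<forall>x\<in>circle. \<phi> i j x = standard_amalgam E \<sigma> i j x)
      \<or> (\<forall>x\<in>circle. \<phi> i j x = standard_amalgam E \<sigma> i j (cnj x))"
    using spin2_embedding_eq_standard_or_cnj spin2_amalgam_image_eq_standard[OF assms(1,3-6)]
    by blast
  then show ?thesis
  proof
    assume "\<forall>x\<in>circle. \<phi> i j x = standard_amalgam E \<sigma> i j x"
    then show ?thesis
      by (intro exI[of _ False]) (simp add: cnj_if_def)
  next
    assume "\<forall>x\<in>circle. \<phi> i j x = standard_amalgam E \<sigma> i j (cnj x)"
    then show ?thesis
      by (intro exI[of _ True]) (simp add: cnj_if_def)
  qed
qed

lemma involutive_hom_iso:
  assumes "f \<in> hom G G" and "\<And>x. x \<in> carrier G \<Longrightarrow> f (f x) = x"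
  shows "f \<in> iso G G"
proof -
  have "bij_betw f (carrier G) (carrier G)"
    by (rule bij_betw_byWitness[where f' = f]) (use assms in \<open>auto simp: hom_def\<close>)
  then show ?thesis
    using assms(1) by (simp add: iso_def)
qed

text \<open>Conjugations by the unit quaternions \<open>e\<^sub>2e\<^sub>3\<close> and \<open>e\<^sub>1e\<^sub>2\<close>:
  the flag \<open>p\<close> inverts the circle \<open>eps12\<close> and fixes \<open>eps23\<close>, the flag \<open>q\<close> does the opposite.\<close>
definition spin3_twist :: "bool \<Rightarrow> bool \<Rightarrow> complex \<times> complex \<Rightarrow> complex \<times> complex" where
  "spin3_twist p q z = (cnj_if p (fst z), (if q then -1 else 1) * cnj_if p (snd z))"

definition torus_twist :: "bool \<Rightarrow> bool \<Rightarrow> complex \<times> complex \<Rightarrow> complex \<times> complex" where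
  "torus_twist p q z = (cnj_if p (fst z), cnj_if q (snd z))"

definition Gdiag_twist ::
  "('v \<Rightarrow> 'v \<Rightarrow> bool) \<Rightarrow> ('i \<Rightarrow> 'v) \<Rightarrow> 'i \<Rightarrow> 'i \<Rightarrow> bool \<Rightarrow> bool
    \<Rightarrow> complex \<times> complex \<Rightarrow> complex \<times> complex"
  where "Gdiag_twist E \<sigma> i j = (if E (\<sigma> i) (\<sigma> j) then spin3_twist else torus_twist)"

lemma spin3_twist_iso: "spin3_twist p q \<in> iso Spin3 Spin3"
  by (rule involutive_hom_iso)
     (cases p; cases q; auto simp: hom_def spin3_twist_def cnj_if_def carrier_Spin3 mult_Spin3
        qmult_def algebra_simps)+

lemma torus_twist_iso: "torus_twist p q \<in> iso Torus Torus"
  by (rule involutive_hom_iso)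
     (cases p; cases q; auto simp: hom_def torus_twist_def cnj_if_def carrier_Torus mult_Torus)+

lemma Gdiag_twist_iso: "Gdiag_twist E \<sigma> i j p q \<in> iso (Gdiag E \<sigma> i j) (Gdiag E \<sigma> i j)"
  by (simp add: Gdiag_twist_def Gdiag_def spin3_twist_iso torus_twist_iso)

definition amalgam_twist ::
  "('v \<Rightarrow> 'v \<Rightarrow> bool) \<Rightarrow> ('i::linorder \<Rightarrow> 'v) \<Rightarrow> ('i \<Rightarrow> 'i \<Rightarrow> bool) \<Rightarrow> 'i \<Rightarrow> 'i
    \<Rightarrow> complex \<times> complex \<Rightarrow> complex \<times> complex"
  where "amalgam_twist E \<sigma> c i j =
    (if i < j then Gdiag_twist E \<sigma> i j (c i j) (c j i) else Gdiag_twist E \<sigma> j i (c j i) (c i j))"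

lemma amalgam_twist_commute: "i \<noteq> j \<Longrightarrow> amalgam_twist E \<sigma> c j i = amalgam_twist E \<sigma> c i j"
  by (auto simp: amalgam_twist_def)

lemma amalgam_twist_iso:
  assumes "symp E"
  shows "amalgam_twist E \<sigma> c i j \<in> iso (Gdiag E \<sigma> i j) (Gdiag E \<sigma> i j)"
  using Gdiag_twist_iso[of E \<sigma> i j] Gdiag_twist_iso[of E \<sigma> j i] Gdiag_commute[OF assms, of \<sigma> j i]
  by (simp add: amalgam_twist_def)

lemma amalgam_twist_standard:
  assumes "symp E" and "i \<noteq> j"
  shows "amalgam_twist E \<sigma> c i j (standard_amalgam E \<sigma> i j (cnj_if (c i j) x)) = standard_amalgam E \<sigma> i j x"
proof (cases "i < j")
  case True
  then show ?thesis
    by (cases "c i j"; cases "c j i")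
       (simp_all add: amalgam_twist_def Gdiag_twist_def standard_amalgam_def spin3_twist_def
         torus_twist_def cnj_if_def eps12_def iota1_def)
next
  case False
  then have "j < i" and "E (\<sigma> i) (\<sigma> j) = E (\<sigma> j) (\<sigma> i)"
    using assms by (auto dest: sympD)
  then show ?thesis
    using False by (cases "c i j"; cases "c j i")
       (simp_all add: amalgam_twist_def Gdiag_twist_def standard_amalgam_def spin3_twist_def
         torus_twist_def cnj_if_def eps23_def iota2_def complex_eq_iff)
qed

theorem mainTheorem7:
  fixes I :: "'i::linorder set" and V :: "'v set" and E :: "'v \<Rightarrow> 'v \<Rightarrow> bool"
    and \<sigma> :: "'i \<Rightarrow> 'v" and \<phi> :: "'i \<Rightarrow> 'i \<Rightarrow> complex \<Rightarrow> complex \<times> complex"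
  assumes "simply_laced_diagram V E"
    and "labelling I V \<sigma>"
    and "spin2_amalgam I E \<sigma> \<phi>"
    and "continuous_amalgam I \<phi>"
  shows "amalgam_iso I E \<sigma> \<phi> (standard_amalgam E \<sigma>)"
proof -
  have "symp E"
    using assms(1) unfolding simply_laced_diagram_def symp_def by blast
  define c where "c i j = (SOME b. \<forall>x\<in>circle. \<phi> i j x = standard_amalgam E \<sigma> i j (cnj_if b x))"
    for i j
  have \<phi>_eq: "\<phi> i j x = standard_amalgam E \<sigma> i j (cnj_if (c i j) x)"
    if "i \<in> I" "j \<in> I" "i \<noteq> j" "x \<in> circle" for i j x
    using someI_ex[OF spin2_amalgam_ex_cnj_if_standard[OF assms(3,4) \<open>symp E\<close> that(1-3)]] that(4)
    unfolding c_def by blast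
  show ?thesis
    unfolding amalgam_iso_def
  proof (intro exI[of _ id] exI[of _ "amalgam_twist E \<sigma> c"] conjI ballI impI)
    fix i j assume ij: "i \<in> I" "j \<in> I" "i \<noteq> j"
    then show "amalgam_twist E \<sigma> c i j = amalgam_twist E \<sigma> c j i"
      by (simp add: amalgam_twist_commute)
    show "amalgam_twist E \<sigma> c i j \<in> iso (Gdiag E \<sigma> i j) (Gdiag E \<sigma> (id i) (id j))"
      using amalgam_twist_iso[OF \<open>symp E\<close>] by simp
    show "amalgam_twist E \<sigma> c i j (\<phi> i j x) = standard_amalgam E \<sigma> (id i) (id j) x"
      if "x \<in> carrier Spin2" for x
      using that \<phi>_eq[OF ij] amalgam_twist_standard[OF \<open>symp E\<close> ij(3)] by (simp add: carrier_Spin2)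
  qed simp
qed

end
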